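(* Consider the heteroscedastic linear model $y(i,k)=\tau_i+\mu+\mathbf g^T(k)\beta+\varepsilon(i,k)$ with treatments $i\in\{1,\ldots,v_1\}$, covariate indices $k\in\{1,\ldots,d\}$, known regressors $\mathbf g(k)\in\mathbb R^{v_2}$, uncorrelated errors with mean zero and $\mathrm{Var}(\varepsilon(i,k))=\sigma^2/\lambda_i$ where $\lambda_1,\ldots,\lambda_{v_1}>0$ are known. Let $w=(w_1,\ldots,w_{v_1})$ be a marginal treatment design with $w_i>0$ for all $i$, and let $\alpha=(\alpha_1,\ldots,\alpha_d)$ be a marginal covariate design feasible for $\mathbf K^T\beta$, i.e. $\mathcal C(\mathbf K)\subseteq\mathcal C(\mathbf S(\alpha))$. Then the product design $\xi=w\otimes\alpha$ (i.e. $\xi(i,k)=w_i\alpha_k$) is feasible for $\mathbf A^T\theta$, and its information matrix is $$\mathbf N_{\mathbf A}(w\otimes\alpha)=\begin{bmatrix}\mathbf N_{\mathbf Q_1}(w) & \mathbf 0\\ \mathbf 0 & \big(\sum_{i=1}^{v_1}\lambda_i w_i\big)\mathbf N_{\mathbf K}(\alpha)\end{bmatrix}.$$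
   Context: Write $\theta=(\tau^T,\mu,\beta^T)^T$ with $\tau=(\tau_1,\ldots,\tau_{v_1})^T$, $\beta\in\mathbb R^{v_2}$, $\mathbf h(k)=(1,\mathbf g^T(k))^T$ and $\mathbf f(i,k)=(\mathbf e_i^T,1,\mathbf g^T(k))^T$. A design $\xi$ is a nonnegative function on $\{1,\ldots,v_1\}\times\{1,\ldots,d\}$ with $\sum_{i,k}\xi(i,k)=1$; its moment matrix is $\mathbf M(\xi)=\sum_{i,k}\xi(i,k)\lambda_i\mathbf f(i,k)\mathbf f^T(i,k)$. Let $\mathbf Q_1\in\mathbb R^{v_1\times s_1}$ have full column rank, satisfy $\mathbf Q_1^T\mathbf 1_{v_1}=\mathbf 0$, and have no zero row; let $\mathbf K\in\mathbb R^{v_2\times s_2}$ have full column rank; let $\mathbf Q_2=(\mathbf 0_{s_2},\mathbf K^T)^T\in\mathbb R^{(v_2+1)\times s_2}$ and $\mathbf A=\mathrm{diag}(\mathbf Q_1,\mathbf Q_2)$. A design $\xi$ is feasible for $\mathbf A^T\theta$ if $\mathcal C(\mathbf A)\subseteq\mathcal C(\mathbf M(\xi))$, and then $\mathbf N_{\mathbf A}(\xi)=(\mathbf A^T\mathbf M^-(\xi)\mathbf A)^{-1}$ (any generalized inverse). A marginal treatment design $w$ is a vector of nonnegative weights $w_1,\ldots,w_{v_1}$ summing to one; $\mathbf M_1(w)=\mathrm{diag}(\lambda_1w_1,\ldots,\lambda_{v_1}w_{v_1})$ and, for $w>0$, $\mathbf N_{\mathbf Q_1}(w)=(\mathbf Q_1^T\mathbf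 M_1^{-1}(w)\mathbf Q_1)^{-1}$. A marginal covariate design $\alpha$ is a vector of nonnegative weights $\alpha_1,\ldots,\alpha_d$ summing to one; $\mathbf S(\alpha)=\sum_k\alpha_k\mathbf g(k)\mathbf g^T(k)-(\sum_k\alpha_k\mathbf g(k))(\sum_k\alpha_k\mathbf g(k))^T$, and for feasible $\alpha$, $\mathbf N_{\mathbf K}(\alpha)=(\mathbf K^T\mathbf S^-(\alpha)\mathbf K)^{-1}$. *)

theory Defs
  imports "HOL-Analysis.Analysis"
begin

text \<open>Index types: treatments 't (v1 = CARD('t)), covariate indices 'k (d = CARD('k)),
  regressor coordinates 'b (v2 = CARD('b)), columns of Q1 's1, columns of K 's2.
  The parameter vector theta = (tau, mu, beta) is indexed by 't + (unit + 'b).\<close>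

type_synonym ('t,'b) param = "'t + (unit + 'b)"

definition outer :: "real^'n \<Rightarrow> real^'m \<Rightarrow> real^'m^'n" where
  "outer x y = (\<chi> i j. x $ i * y $ j)"

definition col_space :: "real^'n^'m \<Rightarrow> (real^'m) set" where
  "col_space A = range (\<lambda>x. A *v x)"

definition is_ginv :: "real^'n^'n \<Rightarrow> real^'n^'n \<Rightarrow> bool" where
  "is_ginv M G \<longleftrightarrow> M ** G ** M = M"

definition ginv :: "real^'n^'n \<Rightarrow> real^'n^'n" where
  "ginv M = (SOME G. is_ginv M G)"

definition fvec :: "('k \<Rightarrow> real^'b::finite) \<Rightarrow> 't::finite \<Rightarrow> 'k \<Rightarrow> real^(('t,'b) param)" where
  "fvec g i k = (\<chi> r. case r of Inl j \<Rightarrow> (if j = i then 1 else 0)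
                               | Inr (Inl _) \<Rightarrow> 1
                               | Inr (Inr b) \<Rightarrow> g k $ b)"

definition moment :: "('t::finite \<Rightarrow> real) \<Rightarrow> ('k::finite \<Rightarrow> real^'b) \<Rightarrow> ('t \<Rightarrow> 'k \<Rightarrow> real)
    \<Rightarrow> real^(('t,'b) param)^(('t,'b) param)" where
  "moment lam g \<xi> = (\<Sum>i\<in>UNIV. \<Sum>k\<in>UNIV. (\<xi> i k * lam i) *\<^sub>R outer (fvec g i k) (fvec g i k))"

definition is_design :: "('t::finite \<Rightarrow> 'k::finite \<Rightarrow> real) \<Rightarrow> bool" where
  "is_design \<xi> \<longleftrightarrow> (\<forall>i k. 0 \<le> \<xi> i k) \<and> (\<Sum>i\<in>UNIV. \<Sum>k\<in>UNIV. \<xi> i k) = 1"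

definition feasible :: "real^'s^'n \<Rightarrow> real^'n^'n \<Rightarrow> bool" where
  "feasible A M \<longleftrightarrow> col_space A \<subseteq> col_space M"

definition info :: "real^'s^'n \<Rightarrow> real^'n^'n \<Rightarrow> real^'s^'s" where
  "info A M = matrix_inv (transpose A ** ginv M ** A)"

definition Q2mat :: "real^'s2::finite^'b::finite \<Rightarrow> real^'s2^(unit + 'b)" where
  "Q2mat K = (\<chi> r c. case r of Inl _ \<Rightarrow> 0 | Inr b \<Rightarrow> K $ b $ c)"

definition blockdiag :: "real^'c1::finite^'r1::finite \<Rightarrow> real^'c2::finite^'r2::finite \<Rightarrow> real^('c1 + 'c2)^('r1 + 'r2)" where
  "blockdiag P R = (\<chi> r c. case (r, c) of (Inl a, Inl b) \<Rightarrow> P $ a $ b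
                                    | (Inr a, Inr b) \<Rightarrow> R $ a $ b
                                    | _ \<Rightarrow> 0)"

definition Amat :: "real^'s1::finite^'t::finite \<Rightarrow> real^'s2::finite^'b::finite \<Rightarrow> real^('s1 + 's2)^(('t,'b) param)" where
  "Amat Q1 K = blockdiag Q1 (Q2mat K)"

definition prod_design :: "('t \<Rightarrow> real) \<Rightarrow> ('k \<Rightarrow> real) \<Rightarrow> 't \<Rightarrow> 'k \<Rightarrow> real" where
  "prod_design w \<alpha> i k = w i * \<alpha> k"

definition M1 :: "('t::finite \<Rightarrow> real) \<Rightarrow> ('t \<Rightarrow> real) \<Rightarrow> real^'t^'t" where
  "M1 lam w = (\<chi> i j. if i = j then lam i * w i else 0)"

definition NQ1 :: "('t::finite \<Rightarrow> real) \<Rightarrow> real^'s1::finite^'t \<Rightarrow> ('t \<Rightarrow> real) \<Rightarrow> real^'s1^'s1" where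
  "NQ1 lam Q1 w = matrix_inv (transpose Q1 ** matrix_inv (M1 lam w) ** Q1)"

definition Smat :: "('k::finite \<Rightarrow> real^'b::finite) \<Rightarrow> ('k \<Rightarrow> real) \<Rightarrow> real^'b^'b" where
  "Smat g \<alpha> = (\<Sum>k\<in>UNIV. \<alpha> k *\<^sub>R outer (g k) (g k))
              - outer (\<Sum>k\<in>UNIV. \<alpha> k *\<^sub>R g k) (\<Sum>k\<in>UNIV. \<alpha> k *\<^sub>R g k)"

definition NK :: "real^'s2::finite^'b::finite \<Rightarrow> ('k::finite \<Rightarrow> real^'b) \<Rightarrow> ('k \<Rightarrow> real) \<Rightarrow> real^'s2^'s2" where
  "NK K g \<alpha> = info K (Smat g \<alpha>)"

end

theory Submission
  imports Defs
begin

(* Write c_i = lam_i w_i, C = sum_i c_i and m = sum_k alpha_k g(k) for the covariate mean.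
   For the product design, M applied to (tau, mu, beta) is (c_i t_i)_i, sum_i c_i t_i and
   (sum_i c_i t_i) m + C S beta, where t_i = tau_i + mu + m^T beta. So M X = A is solved by the
   matrix X with columns (M_1^-1 q_j, 0, 0) and (0, -m^T z_j / C, z_j / C), where S Z = K.
   Since M is symmetric, A^T G A = A^T X for every generalized inverse G of M, and A^T X is
   block diagonal with blocks Q_1^T M_1^-1 Q_1 and K^T Z / C; the same argument gives
   K^T S^- K = K^T Z. Both blocks are congruences P^T B P of positive semidefinite B with
   B P injective, hence nonsingular. *)

lemma invertible_iff_trivial_kernel:
  fixes A :: "'a::field^'n^'n"
  shows "invertible A \<longleftrightarrow> (\<forall>x. A *v x = 0 \<longrightarrow> x = 0)"
  by (simp add: invertible_left_inverse matrix_left_invertible_ker)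

lemma matrix_inv_right:
  fixes A :: "'a::semiring_1^'n^'m"
  assumes "invertible A"
  shows "A ** matrix_inv A = mat 1"
  using someI_ex[OF assms[unfolded invertible_def]] by (simp add: matrix_inv_def)

lemma matrix_inv_unique:
  fixes A B :: "'a::field^'n^'n"
  assumes "A ** B = mat 1"
  shows "invertible A" and "matrix_inv A = B"
proof -
  have BA: "B ** A = mat 1"
    using assms matrix_left_right_inverse by blast
  with assms show "invertible A"
    unfolding invertible_def by blast
  have "B = (B ** A) ** matrix_inv A"
    using matrix_inv_right[OF \<open>invertible A\<close>] by (simp add: matrix_mul_assoc[symmetric])
  then show "matrix_inv A = B"
    by (simp add: BA)
qed

lemma matrix_inv_scaleR:
  fixes A :: "real^'n^'n"
  assumes "c \<noteq> 0" and "invertible A"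
  shows "matrix_inv (c *\<^sub>R A) = inverse c *\<^sub>R matrix_inv A"
  using assms by (intro matrix_inv_unique)
    (simp add: matrix_scalar_ac scalar_matrix_assoc[symmetric] matrix_inv_right)

lemma transpose_mult_eq_inner_columns:
  "transpose X ** Y = (\<chi> i j. column i X \<bullet> column j (Y :: real^'n^'m))"
  by (simp add: matrix_matrix_mult_def vec_eq_iff transpose_def column_def inner_vec_def)

lemma column_matrix_mult: "column j (A ** B) = A *v column j B"
  by (simp add: vec_eq_iff column_def matrix_matrix_mult_def matrix_vector_mult_def)

lemma is_ginv_ginv: "is_ginv M (ginv M)"
proof -
  obtain f where f: "linear f" "\<forall>v\<in>range ((*v) M). M *v f v = v"
    using linear_exists_right_inverse_on[of "(*v) M" UNIV] by auto
  have "M ** matrix f ** M = M"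
    by (simp add: matrix_eq f matrix_vector_mul_assoc[symmetric] matrix_works)
  then show ?thesis
    unfolding ginv_def is_ginv_def by (rule someI)
qed

lemma ginv_sandwich:
  fixes M G :: "real^'n^'n"
  assumes "transpose M = M" and "is_ginv M G" and "M ** X = A"
  shows "transpose A ** G ** A = transpose A ** X"
proof -
  have "transpose A = transpose X ** M"
    using assms(1,3) by (metis matrix_transpose_mul)
  then have "transpose A ** G ** A = transpose X ** (M ** G ** M) ** X"
    using assms(3) by (metis matrix_mul_assoc)
  also have "\<dots> = transpose A ** X"
    using assms(2) \<open>transpose A = transpose X ** M\<close> by (simp add: is_ginv_def)
  finally show ?thesis .
qed

lemma col_space_mult_subset: "col_space (M ** X) \<subseteq> col_space M"
  unfolding col_space_def by (auto simp: matrix_vector_mul_assoc[symmetric])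

lemma col_space_subset_imp_factor:
  fixes K :: "real^'s^'n" and S :: "real^'m^'n"
  assumes "col_space K \<subseteq> col_space S"
  obtains Z where "S ** Z = K"
proof -
  have "\<forall>j. \<exists>z. S *v z = column j K"
    using assms unfolding col_space_def by (metis matrix_vector_mult_basis rangeI image_iff subsetD)
  then obtain z where z: "\<And>j. S *v z j = column j K"
    by metis
  have "S ** transpose (\<chi> j. z j) = K"
    using z by (simp add: vec_eq_iff column_def matrix_matrix_mult_def matrix_vector_mult_def transpose_def)
  then show thesis
    by (rule that)
qed

lemma sum_UNIV_Plus:
  "(\<Sum>x\<in>UNIV. f x) = (\<Sum>a\<in>UNIV. f (Inl a)) + (\<Sum>b\<in>UNIV. f (Inr b))"
  for f :: "'a::finite + 'b::finite \<Rightarrow> 'c::comm_monoid_add"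
  by (subst UNIV_Plus_UNIV[symmetric], subst sum.Plus) (auto simp: o_def)

lemma blockdiag_mult: "blockdiag P R ** blockdiag P' R' = blockdiag (P ** P') (R ** R')"
  unfolding blockdiag_def matrix_matrix_mult_def
  by (auto simp: vec_eq_iff sum_UNIV_Plus split: sum.splits)

lemma blockdiag_mat_1: "blockdiag (mat 1) (mat 1) = mat 1"
  by (auto simp: blockdiag_def mat_def vec_eq_iff split: sum.splits)

lemma matrix_inv_blockdiag:
  fixes P :: "real^'a::finite^'a" and R :: "real^'b::finite^'b"
  assumes "invertible P" and "invertible R"
  shows "invertible (blockdiag P R)"
    and "matrix_inv (blockdiag P R) = blockdiag (matrix_inv P) (matrix_inv R)"
  using assms matrix_inv_unique[of "blockdiag P R" "blockdiag (matrix_inv P) (matrix_inv R)"]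
  by (simp_all add: blockdiag_mult matrix_inv_right blockdiag_mat_1)

lemma inner_transpose_mult: "v \<bullet> (transpose P *v x) = (P *v v) \<bullet> (x :: real^'n)"
  by (metis dot_lmul_matrix inner_commute transpose_matrix_vector)

lemma invertible_congruence:
  fixes M :: "real^'n^'n" and P :: "real^'m^'n"
  assumes psd: "\<And>y. y \<bullet> (M *v y) = 0 \<Longrightarrow> M *v y = 0"
    and inj: "\<And>v. M *v (P *v v) = 0 \<Longrightarrow> v = 0"
  shows "invertible (transpose P ** M ** P)"
  unfolding invertible_iff_trivial_kernel
proof (intro allI impI)
  fix v assume "(transpose P ** M ** P) *v v = 0"
  then have "(P *v v) \<bullet> (M *v (P *v v)) = 0"
    by (metis inner_transpose_mult inner_zero_right matrix_vector_mul_assoc)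
  then show "v = 0"
    using psd inj by blast
qed

lemma outer_mult_vector: "outer x y *v v = (y \<bullet> v) *\<^sub>R x"
  by (simp add: vec_eq_iff outer_def matrix_vector_mult_def inner_vec_def sum_distrib_left mult_ac)

lemma sum_matrix_vector_mult: "(\<Sum>k\<in>A. M k) *v v = (\<Sum>k\<in>A. M k *v v)"
  by (simp add: vec_eq_iff matrix_vector_mult_def sum_distrib_right sum.swap[where A = UNIV])

lemma gram_mult_vector:
  "(\<Sum>k\<in>A. c k *\<^sub>R outer (u k) (u k)) *v y = (\<Sum>k\<in>A. (c k * (u k \<bullet> y)) *\<^sub>R u k)"
  by (simp add: sum_matrix_vector_mult scaleR_matrix_vector_assoc[symmetric] outer_mult_vector)

lemma gram_kernel:
  fixes u :: "'k \<Rightarrow> real^'n"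
  assumes "finite A" and "\<And>k. k \<in> A \<Longrightarrow> 0 \<le> c k"
    and "y \<bullet> ((\<Sum>k\<in>A. c k *\<^sub>R outer (u k) (u k)) *v y) = 0"
  shows "(\<Sum>k\<in>A. c k *\<^sub>R outer (u k) (u k)) *v y = 0"
proof -
  have "(\<Sum>k\<in>A. c k * (u k \<bullet> y)\<^sup>2) = 0"
    using assms(3) by (simp add: gram_mult_vector inner_sum_right inner_commute power2_eq_square mult_ac)
  then have "\<forall>k\<in>A. c k * (u k \<bullet> y)\<^sup>2 = 0"
    using assms(1,2) by (simp add: sum_nonneg_eq_0_iff)
  then have "\<forall>k\<in>A. c k * (u k \<bullet> y) = 0"
    by (simp add: power2_eq_square)
  then show ?thesis
    by (simp add: gram_mult_vector sum.neutral)
qed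

definition diag_mat :: "('n \<Rightarrow> real) \<Rightarrow> real^'n^'n" where
  "diag_mat d = (\<chi> i j. if i = j then d i else 0)"

lemma diag_mat_mult_vector: "diag_mat d *v x = (\<chi> i. d i * x $ i)"
  by (simp add: vec_eq_iff diag_mat_def matrix_vector_mult_def if_distrib if_distribR
      cong del: if_weak_cong)

lemma matrix_inv_diag_mat:
  assumes "\<And>i. d i \<noteq> 0"
  shows "matrix_inv (diag_mat d) = diag_mat (\<lambda>i. inverse (d i))"
proof -
  have "diag_mat d ** diag_mat (\<lambda>i. inverse (d i)) = mat 1"
    using assms
    by (simp add: matrix_eq matrix_vector_mul_assoc[symmetric] diag_mat_mult_vector vec_eq_iff)
  then show ?thesis
    by (rule matrix_inv_unique)
qed

lemma invertible_congruence_diag_mat: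
  fixes Q :: "real^'s^'n"
  assumes "\<And>i. 0 < d i" and "rank Q = CARD('s)"
  shows "invertible (transpose Q ** diag_mat d ** Q)"
proof (rule invertible_congruence)
  fix y :: "real^'n" assume "y \<bullet> (diag_mat d *v y) = 0"
  then have "(\<Sum>i\<in>UNIV. d i * (y $ i)\<^sup>2) = 0"
    by (simp add: diag_mat_mult_vector inner_vec_def power2_eq_square mult_ac)
  then have "\<forall>i. d i * (y $ i)\<^sup>2 = 0"
    using assms(1) by (simp add: sum_nonneg_eq_0_iff less_imp_le)
  then show "diag_mat d *v y = 0"
    using assms(1) by (simp add: vec_eq_iff diag_mat_mult_vector)
next
  fix v assume "diag_mat d *v (Q *v v) = 0"
  then have "Q *v v = Q *v 0"
    using assms(1) by (simp add: vec_eq_iff diag_mat_mult_vector less_imp_neq[symmetric])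
  then show "v = 0"
    using assms(2) full_rank_injective injD by metis
qed

lemma matrix_inv_M1:
  assumes "\<And>i. 0 < lam i * w i"
  shows "matrix_inv (M1 lam w) = diag_mat (\<lambda>i. inverse (lam i * w i))"
proof -
  have M1: "M1 lam w = diag_mat (\<lambda>i. lam i * w i)"
    by (simp add: M1_def diag_mat_def)
  have "lam i * w i \<noteq> 0" for i
    using assms[of i] by linarith
  then show ?thesis
    unfolding M1 by (rule matrix_inv_diag_mat)
qed

lemma invertible_M1_congruence:
  fixes Q :: "real^'s^'t"
  assumes "\<And>i. 0 < lam i * w i" and "rank Q = CARD('s)"
  shows "invertible (transpose Q ** matrix_inv (M1 lam w) ** Q)"
  unfolding matrix_inv_M1[OF assms(1)]
  by (rule invertible_congruence_diag_mat[OF _ assms(2)])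
    (use assms(1) in \<open>simp del: inverse_mult_distrib\<close>)

definition param_vec :: "real^'t \<Rightarrow> real \<Rightarrow> real^'b \<Rightarrow> real^(('t,'b) param)" where
  "param_vec \<tau> \<mu> \<beta> =
    (\<chi> r. case r of Inl i \<Rightarrow> \<tau> $ i | Inr (Inl _) \<Rightarrow> \<mu> | Inr (Inr b) \<Rightarrow> \<beta> $ b)"

lemma param_vec_nth [simp]:
  "param_vec \<tau> \<mu> \<beta> $ Inl i = \<tau> $ i"
  "param_vec \<tau> \<mu> \<beta> $ Inr (Inl u) = \<mu>"
  "param_vec \<tau> \<mu> \<beta> $ Inr (Inr b) = \<beta> $ b"
  by (simp_all add: param_vec_def)

lemma param_vec_eq_iff:
  "param_vec \<tau> \<mu> \<beta> = param_vec \<tau>' \<mu>' \<beta>' \<longleftrightarrow> \<tau> = \<tau>' \<and> \<mu> = \<mu>' \<and> \<beta> = \<beta>'"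
  by (auto simp: vec_eq_iff param_vec_def split: sum.splits)

lemma inner_param_vec:
  "param_vec \<tau> \<mu> \<beta> \<bullet> param_vec \<tau>' \<mu>' \<beta>' = \<tau> \<bullet> \<tau>' + \<mu> * \<mu>' + \<beta> \<bullet> \<beta>'"
  by (simp add: inner_vec_def sum_UNIV_Plus UNIV_unit)

lemma scaleR_param_vec: "c *\<^sub>R param_vec \<tau> \<mu> \<beta> = param_vec (c *\<^sub>R \<tau>) (c * \<mu>) (c *\<^sub>R \<beta>)"
  by (auto simp: vec_eq_iff param_vec_def split: sum.splits)

lemma sum_param_vec:
  "(\<Sum>x\<in>A. param_vec (\<tau> x) (\<mu> x) (\<beta> x))
    = param_vec (\<Sum>x\<in>A. \<tau> x) (\<Sum>x\<in>A. \<mu> x) (\<Sum>x\<in>A. \<beta> x)"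
  by (auto simp: vec_eq_iff param_vec_def split: sum.splits)

lemma fvec_eq_param_vec: "fvec g i k = param_vec (axis i 1) 1 (g k)"
  by (auto simp: vec_eq_iff fvec_def param_vec_def axis_def split: sum.splits)

lemma column_Amat:
  "column (Inl i) (Amat Q1 K) = param_vec (column i Q1) 0 0"
  "column (Inr j) (Amat Q1 K) = param_vec 0 0 (column j K)"
  by (auto simp: vec_eq_iff column_def Amat_def blockdiag_def Q2mat_def param_vec_def
      split: sum.splits)

lemma moment_symmetric: "transpose (moment lam g \<xi>) = moment lam g \<xi>"
  by (simp add: vec_eq_iff transpose_def moment_def outer_def mult.commute)

lemma moment_mult_vector:
  "moment lam g \<xi> *v v = (\<Sum>i\<in>UNIV. \<Sum>k\<in>UNIV. (\<xi> i k * lam i * (fvec g i k \<bullet> v)) *\<^sub>R fvec g i k)"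
  by (simp add: moment_def sum_matrix_vector_mult scaleR_matrix_vector_assoc[symmetric]
      outer_mult_vector)

definition covariate_mean :: "('k::finite \<Rightarrow> real^'b) \<Rightarrow> ('k \<Rightarrow> real) \<Rightarrow> real^'b" where
  "covariate_mean g \<alpha> = (\<Sum>k\<in>UNIV. \<alpha> k *\<^sub>R g k)"

lemma Smat_symmetric: "transpose (Smat g \<alpha>) = Smat g \<alpha>"
  by (simp add: vec_eq_iff transpose_def Smat_def outer_def mult.commute)

lemma Smat_mult_vector_uncentered:
  "Smat g \<alpha> *v \<beta>
    = (\<Sum>k\<in>UNIV. (\<alpha> k * (g k \<bullet> \<beta>)) *\<^sub>R g k)
      - (covariate_mean g \<alpha> \<bullet> \<beta>) *\<^sub>R covariate_mean g \<alpha>"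
  by (simp add: Smat_def covariate_mean_def matrix_vector_mult_diff_rdistrib gram_mult_vector
      outer_mult_vector)

lemma Smat_centered:
  fixes g :: "'k::finite \<Rightarrow> real^'b::finite"
  assumes "(\<Sum>k\<in>UNIV. \<alpha> k) = 1"
  defines "m \<equiv> covariate_mean g \<alpha>"
  shows "Smat g \<alpha> = (\<Sum>k\<in>UNIV. \<alpha> k *\<^sub>R outer (g k - m) (g k - m))"
proof -
  have m: "m $ a = (\<Sum>k\<in>UNIV. \<alpha> k * g k $ a)" for a
    by (simp add: m_def covariate_mean_def)
  have "(\<Sum>k\<in>UNIV. \<alpha> k * ((g k $ a - m $ a) * (g k $ b - m $ b)))
      = (\<Sum>k\<in>UNIV. \<alpha> k * (g k $ a * g k $ b)) - m $ b * (\<Sum>k\<in>UNIV. \<alpha> k * g k $ a)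
        - m $ a * (\<Sum>k\<in>UNIV. \<alpha> k * g k $ b) + m $ a * m $ b * (\<Sum>k\<in>UNIV. \<alpha> k)" for a b
    by (simp add: algebra_simps sum.distrib sum_subtractf sum_distrib_left)
  then show ?thesis
    using assms(1) by (simp add: vec_eq_iff Smat_def outer_def m[symmetric] m_def[symmetric])
qed

lemma Smat_kernel:
  assumes "\<forall>k. 0 \<le> \<alpha> k" and "(\<Sum>k\<in>UNIV. \<alpha> k) = 1" and "y \<bullet> (Smat g \<alpha> *v y) = 0"
  shows "Smat g \<alpha> *v y = 0"
  using assms gram_kernel[of UNIV \<alpha>] by (simp add: Smat_centered)

lemma moment_prod_design_mult_param_vec:
  fixes g :: "'k::finite \<Rightarrow> real^'b::finite" and lam w :: "'t::finite \<Rightarrow> real"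
    and \<tau> :: "real^'t" and \<mu> :: real and \<beta> :: "real^'b"
  assumes \<alpha>_sum: "(\<Sum>k\<in>UNIV. \<alpha> k) = 1"
  defines "m \<equiv> covariate_mean g \<alpha>"
  defines "t \<equiv> \<lambda>i. lam i * w i * (\<tau> $ i + \<mu> + m \<bullet> \<beta>)"
  shows "moment lam g (prod_design w \<alpha>) *v param_vec \<tau> \<mu> \<beta>
    = param_vec (\<chi> i. t i) (\<Sum>i\<in>UNIV. t i)
        ((\<Sum>i\<in>UNIV. t i) *\<^sub>R m + (\<Sum>i\<in>UNIV. lam i * w i) *\<^sub>R (Smat g \<alpha> *v \<beta>))"
proof -
  have mean_inner: "(\<Sum>k\<in>UNIV. \<alpha> k * (s + g k \<bullet> \<beta>)) = s + m \<bullet> \<beta>" for s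
    using \<alpha>_sum by (simp add: distrib_left sum.distrib sum_distrib_right[symmetric] m_def
        covariate_mean_def inner_sum_left)
  have mean_outer: "(\<Sum>k\<in>UNIV. (\<alpha> k * (s + g k \<bullet> \<beta>)) *\<^sub>R g k)
      = (s + m \<bullet> \<beta>) *\<^sub>R m + Smat g \<alpha> *v \<beta>" for s
    by (simp add: Smat_mult_vector_uncentered distrib_left scaleR_add_left sum.distrib
        scaleR_sum_right m_def covariate_mean_def algebra_simps)
  have mean_param_vec: "(\<Sum>k\<in>UNIV. (\<alpha> k * (s + g k \<bullet> \<beta>)) *\<^sub>R param_vec (axis i 1) 1 (g k))
      = param_vec ((s + m \<bullet> \<beta>) *\<^sub>R axis i 1) (s + m \<bullet> \<beta>)
          ((s + m \<bullet> \<beta>) *\<^sub>R m + Smat g \<alpha> *v \<beta>)"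
    for s i
    by (simp only: scaleR_param_vec sum_param_vec scaleR_sum_left[symmetric] mult_1_right
        mean_inner mean_outer)
  have "moment lam g (prod_design w \<alpha>) *v param_vec \<tau> \<mu> \<beta>
      = (\<Sum>i\<in>UNIV. (lam i * w i) *\<^sub>R
          (\<Sum>k\<in>UNIV. (\<alpha> k * (\<tau> $ i + \<mu> + g k \<bullet> \<beta>)) *\<^sub>R param_vec (axis i 1) 1 (g k)))"
    by (simp add: moment_mult_vector prod_design_def fvec_eq_param_vec inner_param_vec inner_axis'
        scaleR_sum_right mult_ac)
  also have "\<dots> = (\<Sum>i\<in>UNIV. param_vec (t i *\<^sub>R axis i 1) (t i)
                     (t i *\<^sub>R m + (lam i * w i) *\<^sub>R (Smat g \<alpha> *v \<beta>)))"
    by (simp only: mean_param_vec) (simp add: scaleR_param_vec t_def scaleR_add_right)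
  also have "\<dots> = param_vec (\<chi> i. t i) (\<Sum>i\<in>UNIV. t i)
        ((\<Sum>i\<in>UNIV. t i) *\<^sub>R m + (\<Sum>i\<in>UNIV. lam i * w i) *\<^sub>R (Smat g \<alpha> *v \<beta>))"
    using basis_expansion[of "\<chi> i. t i"]
    by (simp add: sum_param_vec param_vec_eq_iff sum.distrib scaleR_sum_left scalar_mult_eq_scaleR)
  finally show ?thesis .
qed

lemma moment_prod_design_treatment_column:
  fixes g :: "'k::finite \<Rightarrow> real^'b::finite" and lam w :: "'t::finite \<Rightarrow> real"
  assumes "(\<Sum>k\<in>UNIV. \<alpha> k) = 1" and "\<And>i. 0 < lam i * w i" and "(\<Sum>i\<in>UNIV. q $ i) = 0"
  shows "moment lam g (prod_design w \<alpha>) *v param_vec (matrix_inv (M1 lam w) *v q) 0 0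
    = param_vec q 0 (0 :: real^'b)"
proof -
  have "lam i * w i * ((matrix_inv (M1 lam w) *v q) $ i) = q $ i" for i
  proof -
    have "(matrix_inv (M1 lam w) *v q) $ i = inverse (lam i * w i) * q $ i"
      by (simp add: matrix_inv_M1[OF assms(2)] diag_mat_mult_vector del: inverse_mult_distrib)
    moreover have "lam i * w i \<noteq> 0"
      using assms(2)[of i] by (metis less_irrefl)
    ultimately show ?thesis
      by (metis mult.assoc right_inverse mult_1_left)
  qed
  then show ?thesis
    using assms(1,3) by (simp add: moment_prod_design_mult_param_vec)
qed

lemma moment_prod_design_covariate_column:
  fixes g :: "'k::finite \<Rightarrow> real^'b::finite" and lam w :: "'t::finite \<Rightarrow> real"
  assumes "(\<Sum>k\<in>UNIV. \<alpha> k) = 1" and "C = (\<Sum>i\<in>UNIV. lam i * w i)" and "C \<noteq> 0"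
  shows "moment lam g (prod_design w \<alpha>) *v param_vec 0 (- (covariate_mean g \<alpha> \<bullet> z) / C) (z /\<^sub>R C)
    = param_vec (0 :: real^'t) 0 (Smat g \<alpha> *v z)"
  using assms by (simp add: moment_prod_design_mult_param_vec matrix_vector_mult_scaleR divide_inverse
      mult.commute zero_vec_def[symmetric])

lemma matrix_eq_columnI: "(\<And>j. column j A = column j B) \<Longrightarrow> A = B"
  by (simp add: vec_eq_iff column_def)

lemma moment_prod_design_solves_Amat:
  fixes g :: "'k::finite \<Rightarrow> real^'b::finite" and lam w :: "'t::finite \<Rightarrow> real"
    and Q1 :: "real^'s1::finite^'t" and K :: "real^'s2::finite^'b"
  assumes \<alpha>_sum: "(\<Sum>k\<in>UNIV. \<alpha> k) = 1"
    and lam_w: "\<And>i. 0 < lam i * w i"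
    and C_def: "C = (\<Sum>i\<in>UNIV. lam i * w i)"
    and Q1_contrast: "transpose Q1 *v (1 :: real^'t) = 0"
    and SZ: "Smat g \<alpha> ** Z = K"
  obtains X where "moment lam g (prod_design w \<alpha>) ** X = Amat Q1 K"
    and "transpose (Amat Q1 K) ** X
      = blockdiag (transpose Q1 ** matrix_inv (M1 lam w) ** Q1) (inverse C *\<^sub>R (transpose K ** Z))"
proof -
  have "C > 0"
    unfolding C_def using lam_w by (simp add: sum_pos)
  then have C_nz: "C \<noteq> 0"
    by simp
  define col :: "'s1 + 's2 \<Rightarrow> real^(('t,'b) param)" where
    "col c = (case c of
        Inl j \<Rightarrow> param_vec (matrix_inv (M1 lam w) *v column j Q1) 0 0
      | Inr j \<Rightarrow> param_vec 0 (- (covariate_mean g \<alpha> \<bullet> column j Z) / C) (column j Z /\<^sub>R C))" for c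
  define X where "X = transpose (\<chi> c. col c)"
  have column_X: "column c X = col c" for c
    by (simp add: X_def row_def)
  have "column c (moment lam g (prod_design w \<alpha>) ** X) = column c (Amat Q1 K)" for c
  proof (cases c)
    case (Inl j)
    have "(\<Sum>i\<in>UNIV. column j Q1 $ i) = (transpose Q1 *v 1) $ j"
      by (simp add: column_def vector_matrix_mult_def)
    then show ?thesis
      using Inl \<alpha>_sum lam_w Q1_contrast
      by (simp add: column_matrix_mult column_X col_def column_Amat moment_prod_design_treatment_column)
  next
    case (Inr j)
    then show ?thesis
      using moment_prod_design_covariate_column[OF \<alpha>_sum C_def C_nz]
      by (simp add: column_matrix_mult column_X col_def column_Amat SZ[symmetric])
  qed
  then have "moment lam g (prod_design w \<alpha>) ** X = Amat Q1 K"
    by (rule matrix_eq_columnI)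
  moreover have "transpose (Amat Q1 K) ** X
      = blockdiag (transpose Q1 ** matrix_inv (M1 lam w) ** Q1) (inverse C *\<^sub>R (transpose K ** Z))"
    unfolding matrix_mul_assoc[symmetric]
    by (auto simp: transpose_mult_eq_inner_columns vec_eq_iff blockdiag_def column_X col_def
        column_Amat inner_param_vec column_matrix_mult split: sum.splits)
  ultimately show thesis
    by (rule that)
qed

lemma NK_eq_matrix_inv_factor:
  assumes "Smat g \<alpha> ** Z = K"
  shows "NK K g \<alpha> = matrix_inv (transpose K ** Z)"
  unfolding NK_def info_def using ginv_sandwich[OF Smat_symmetric is_ginv_ginv assms] by simp

lemma invertible_Smat_congruence:
  fixes g :: "'k::finite \<Rightarrow> real^'b::finite" and K :: "real^'s::finite^'b"
  assumes \<alpha>_nonneg: "\<forall>k. 0 \<le> \<alpha> k" and \<alpha>_sum: "(\<Sum>k\<in>UNIV. \<alpha> k) = 1"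
    and SZ: "Smat g \<alpha> ** Z = K" and K_rank: "rank K = CARD('s)"
  shows "invertible (transpose K ** Z)"
proof -
  have "transpose K ** Z = transpose Z ** Smat g \<alpha> ** Z"
    using SZ Smat_symmetric by (metis matrix_transpose_mul)
  moreover have "invertible (transpose Z ** Smat g \<alpha> ** Z)"
  proof (rule invertible_congruence)
    show "Smat g \<alpha> *v y = 0" if "y \<bullet> (Smat g \<alpha> *v y) = 0" for y
      using Smat_kernel[OF \<alpha>_nonneg \<alpha>_sum that] .
    show "v = 0" if "Smat g \<alpha> *v (Z *v v) = 0" for v
    proof -
      have "K *v v = K *v 0"
        using that SZ by (simp add: matrix_vector_mul_assoc)
      then show ?thesis
        using K_rank full_rank_injective injD by metis
    qed
  qed
  ultimately show ?thesis
    by simp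
qed

theorem proposition1:
  fixes lam :: "'t::finite \<Rightarrow> real"
    and g :: "'k::finite \<Rightarrow> real^'b::finite"
    and Q1 :: "real^'s1::finite^'t"
    and K :: "real^'s2::finite^'b"
    and w :: "'t \<Rightarrow> real"
    and \<alpha> :: "'k \<Rightarrow> real"
  assumes lam_pos: "\<forall>i. 0 < lam i"
    and Q1_rank: "rank Q1 = CARD('s1)"
    and Q1_contrast: "transpose Q1 *v (1 :: real^'t) = 0"
    and Q1_rows: "\<forall>i. Q1 $ i \<noteq> 0"
    and K_rank: "rank K = CARD('s2)"
    and w_pos: "\<forall>i. 0 < w i"
    and w_sum: "(\<Sum>i\<in>UNIV. w i) = 1"
    and \<alpha>_nonneg: "\<forall>k. 0 \<le> \<alpha> k"
    and \<alpha>_sum: "(\<Sum>k\<in>UNIV. \<alpha> k) = 1"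
    and \<alpha>_feasible: "col_space K \<subseteq> col_space (Smat g \<alpha>)"
  shows "feasible (Amat Q1 K) (moment lam g (prod_design w \<alpha>))
     \<and> (\<forall>G. is_ginv (moment lam g (prod_design w \<alpha>)) G \<longrightarrow>
           invertible (transpose (Amat Q1 K) ** G ** Amat Q1 K)
         \<and> matrix_inv (transpose (Amat Q1 K) ** G ** Amat Q1 K)
           = blockdiag (NQ1 lam Q1 w) ((\<Sum>i\<in>UNIV. lam i * w i) *\<^sub>R NK K g \<alpha>))"
proof -
  define C where "C = (\<Sum>i\<in>UNIV. lam i * w i)"
  have lam_w: "0 < lam i * w i" for i
    using lam_pos w_pos by simp
  then have "C > 0"
    unfolding C_def by (simp add: sum_pos)
  obtain Z where SZ: "Smat g \<alpha> ** Z = K"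
    using col_space_subset_imp_factor[OF \<alpha>_feasible] .
  define B1 where "B1 = transpose Q1 ** matrix_inv (M1 lam w) ** Q1"
  define B2 where "B2 = inverse C *\<^sub>R (transpose K ** Z)"
  obtain X where MX: "moment lam g (prod_design w \<alpha>) ** X = Amat Q1 K"
    and AX: "transpose (Amat Q1 K) ** X = blockdiag B1 B2"
    using moment_prod_design_solves_Amat[OF \<alpha>_sum lam_w C_def Q1_contrast SZ]
    unfolding B1_def B2_def .
  have B1: "invertible B1"
    unfolding B1_def using invertible_M1_congruence[OF lam_w Q1_rank] .
  have B2: "invertible B2" and "matrix_inv B2 = C *\<^sub>R NK K g \<alpha>"
    using invertible_Smat_congruence[OF \<alpha>_nonneg \<alpha>_sum SZ K_rank] \<open>C > 0\<close>
    by (simp_all add: B2_def scalar_invertible matrix_inv_scaleR NK_eq_matrix_inv_factor[OF SZ])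
  then have "invertible (blockdiag B1 B2)"
    and "matrix_inv (blockdiag B1 B2) = blockdiag (NQ1 lam Q1 w) (C *\<^sub>R NK K g \<alpha>)"
    using matrix_inv_blockdiag[OF B1 B2] by (simp_all add: B1_def NQ1_def)
  moreover have "feasible (Amat Q1 K) (moment lam g (prod_design w \<alpha>))"
    unfolding feasible_def using col_space_mult_subset MX by metis
  ultimately show ?thesis
    unfolding C_def[symmetric] using ginv_sandwich[OF moment_symmetric _ MX] AX by simp
qed

end
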